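(* Let $p\ge 2$, $w\ge 0$, $z\in\mathbb{R}^{p-1}$. For $\lambda>0$ let $(\hat\beta^+(\lambda),\hat\beta^-(\lambda),\hat\theta(\lambda))$ be the unique solution of \[ \min_{\beta^\pm\in\mathbb{R},\,\theta\in\mathbb{R}^{p-1}}\ \frac12\bigl(w-(\beta^+-\beta^-)\bigr)^2+\frac12\|z-\theta\|_2^2+\lambda(\beta^++\beta^-)+\lambda\|\theta\|_1 \quad\text{s.t. } \beta^+\ge0,\ \beta^-\ge0,\ \|\theta\|_1\le\beta^++\beta^-, \] and write $\hat\beta=\hat\beta^+-\hat\beta^-$. Define $\tilde\lambda_1=\min\{\lambda\ge0:\|S(z,\lambda)\|_1+\lambda\le w\}$, $\tilde\lambda_3=\max\{\lambda\ge0:\|S(z,2\lambda)\|_1\ge w\}$ and $\tilde\lambda_4=(w+\|z\|_\infty)/2$. Then for $\lambda>0$: 1. (Big main effect) If $\|z\|_\infty\le\|z\|_1<w$: for $\lambda\ge w$, $\hat\beta=0$ and $\hat\theta=0$; for $\tilde\lambda_1\le\lambda<w$, $\hat\beta=w-\lambda$ and $\hat\theta=S(z,\lambda)$; for $\lambda<\tilde\lambda_1$, there is $\hat\alpha(\lambda)>0$ with $\hat\beta=w-\lambda+\hat\alpha(\lambda)$ and $\hat\theta=S(z,\lambda+\hat\alpha(\lambda))$. 2. (Moderate main effect) If $\|z\|_\infty\le w\le\|z\|_1$: for $\lambda\ge w$, $\hat\beta=0$ and $\hat\theta=0$; for $\tilde\lambda_1\le\lambda<w$, $\hat\beta=w-\lambda$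 and $\hat\theta=S(z,\lambda)$; for $\tilde\lambda_3\le\lambda<\tilde\lambda_1$, there is $\hat\alpha(\lambda)>0$ with $\hat\beta=w-\lambda+\hat\alpha(\lambda)$ and $\hat\theta=S(z,\lambda+\hat\alpha(\lambda))$; for $\lambda<\tilde\lambda_3$, $\hat\beta=w$ and $\hat\theta=S(z,2\lambda)$. 3. (Big interaction) If $w<\|z\|_\infty\le\|z\|_1$: for $\lambda\ge\tilde\lambda_4$, $\hat\beta=0$ and $\hat\theta=0$; for $\tilde\lambda_3\le\lambda<\tilde\lambda_4$, there is $\hat\alpha(\lambda)>0$ with $\hat\beta=w-\lambda+\hat\alpha(\lambda)$ and $\hat\theta=S(z,\lambda+\hat\alpha(\lambda))$; for $\lambda<\tilde\lambda_3$, $\hat\beta=w$ and $\hat\theta=S(z,2\lambda)$.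
   Context: $S(x,t)=\mathrm{sign}(x)\cdot(|x|-t)_+$ is the soft-thresholding function, applied componentwise to vectors. The solution of the displayed problem exists and is unique for every $\lambda>0$. Conventions: the minimum of an empty set is $+\infty$, the maximum of an empty set is $-\infty$, and the maximum of a set unbounded above is $+\infty$. *)

theory Defs
  imports "HOL-Analysis.Analysis" "HOL-Library.Extended_Real"
begin

definition soft :: "real \<Rightarrow> real \<Rightarrow> real" where
  "soft x t = sgn x * max (\<bar>x\<bar> - t) 0"

definition soft_vec :: "real^'n \<Rightarrow> real \<Rightarrow> real^'n" where
  "soft_vec z t = (\<chi> i. soft (z $ i) t)"

definition l1norm :: "real^'n \<Rightarrow> real" where
  "l1norm x = (\<Sum>i\<in>UNIV. \<bar>x $ i\<bar>)"

definition linfnorm :: "real^'n \<Rightarrow> real" where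
  "linfnorm x = Max (range (\<lambda>i. \<bar>x $ i\<bar>))"

definition objective :: "real \<Rightarrow> real^'n \<Rightarrow> real \<Rightarrow> real \<Rightarrow> real \<Rightarrow> real^'n \<Rightarrow> real" where
  "objective w z lam bp bm \<theta> =
     (1/2) * (w - (bp - bm))\<^sup>2 + (1/2) * (norm (z - \<theta>))\<^sup>2 + lam * (bp + bm) + lam * l1norm \<theta>"

definition feasible :: "real \<Rightarrow> real \<Rightarrow> real^'n \<Rightarrow> bool" where
  "feasible bp bm \<theta> \<longleftrightarrow> bp \<ge> 0 \<and> bm \<ge> 0 \<and> l1norm \<theta> \<le> bp + bm"

definition is_solution :: "real \<Rightarrow> real^'n \<Rightarrow> real \<Rightarrow> real \<Rightarrow> real \<Rightarrow> real^'n \<Rightarrow> bool" where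
  "is_solution w z lam bp bm \<theta> \<longleftrightarrow>
     feasible bp bm \<theta> \<and>
     (\<forall>bp' bm' (\<theta>'::real^'n). feasible bp' bm' \<theta>' \<longrightarrow>
        objective w z lam bp bm \<theta> \<le> objective w z lam bp' bm' \<theta>')"

definition lam1 :: "real \<Rightarrow> real^'n \<Rightarrow> ereal" where
  "lam1 w z = (let S = {lam. lam \<ge> 0 \<and> l1norm (soft_vec z lam) + lam \<le> w} in
     if S = {} then \<infinity> else ereal (LEAST lam. lam \<in> S))"

definition lam3 :: "real \<Rightarrow> real^'n \<Rightarrow> ereal" where
  "lam3 w z = (let S = {lam. lam \<ge> 0 \<and> l1norm (soft_vec z (2 * lam)) \<ge> w} in
     if S = {} then -\<infinity> else if \<not> bdd_above S then \<infinity> else ereal (GREATEST lam. lam \<in> S))"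

definition lam4 :: "real \<Rightarrow> real^'n \<Rightarrow> real" where
  "lam4 w z = (w + linfnorm z) / 2"

end

theory Submission
  imports Defs
begin

text \<open>The constraint \<parallel>\<theta>\<parallel>_1 \<le> \<beta>+ + \<beta>- is handled by a Lagrange multiplier
  \<alpha> \<in> [0, \<lambda>]: the objective splits into the scalar problem (w - \<beta>)^2/2 + (\<lambda> - \<alpha>)|\<beta>|,
  the lasso problem \<parallel>z - \<theta>\<parallel>^2/2 + (\<lambda> + \<alpha>)\<parallel>\<theta>\<parallel>_1 and two slack terms that are
  nonnegative on the feasible set. So \<beta> = S(w, \<lambda> - \<alpha>), \<theta> = S(z, \<lambda> + \<alpha>) is optimal as
  soon as complementary slackness holds, and as the objective is strongly convex in
  (\<beta>+ - \<beta>-, \<theta>) it is the solution. The regimes of the statement are \<alpha> = 0 (when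
  \<parallel>S(z, \<lambda>)\<parallel>_1 + \<lambda> \<le> w), \<alpha> = \<lambda> (when \<parallel>S(z, 2\<lambda>)\<parallel>_1 \<ge> w), the zero solution when
  both thresholds exceed the data, and otherwise a root \<alpha> \<in> (0, \<lambda>) of
  \<parallel>S(z, \<lambda> + \<alpha>)\<parallel>_1 = w - \<lambda> + \<alpha>, found by the intermediate value theorem.\<close>

lemma soft_prox_le:
  assumes c: "c \<ge> 0"
  shows "(1/2) * (z - soft z c)\<^sup>2 + c * \<bar>soft z c\<bar> \<le> (1/2) * (z - x)\<^sup>2 + c * \<bar>x\<bar>"
proof -
  consider "z > c" | "z < -c" | "\<bar>z\<bar> \<le> c" by linarith
  then show ?thesis
  proof cases
    case 1
    then have s: "soft z c = z - c" using c by (simp add: soft_def sgn_if)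
    have "c * x \<le> c * \<bar>x\<bar>" using c by (simp add: mult_left_mono)
    then show ?thesis using 1 c zero_le_power2[of "z - x - c"]
      by (simp add: s power2_eq_square algebra_simps)
  next
    case 2
    then have s: "soft z c = z + c" using c by (simp add: soft_def sgn_if)
    have "- (c * x) \<le> c * \<bar>x\<bar>" using mult_left_mono[OF abs_ge_minus_self c] by simp
    then show ?thesis using 2 c zero_le_power2[of "z - x + c"]
      by (simp add: s power2_eq_square algebra_simps)
  next
    case 3
    then have s: "soft z c = 0" by (simp add: soft_def)
    have "z * x \<le> c * \<bar>x\<bar>"
      using 3 abs_ge_self[of "z * x"] mult_right_mono[OF 3 abs_ge_zero[of x]] by (simp add: abs_mult)
    moreover have "(z - x)\<^sup>2 = z\<^sup>2 - 2 * (z * x) + x\<^sup>2" by (simp add: power2_diff)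
    moreover have "(1/2) * (z - soft z c)\<^sup>2 + c * \<bar>soft z c\<bar> = (1/2) * z\<^sup>2" by (simp add: s)
    ultimately show ?thesis using zero_le_power2[of x] by linarith
  qed
qed

lemma abs_soft: "c \<ge> 0 \<Longrightarrow> \<bar>soft x c\<bar> = max (\<bar>x\<bar> - c) 0"
  by (auto simp: soft_def abs_mult sgn_if)

lemma soft_of_nonneg: "x \<ge> 0 \<Longrightarrow> c \<ge> 0 \<Longrightarrow> soft x c = max (x - c) 0"
  by (auto simp: soft_def sgn_if)

lemma power2_norm_vec_eq_sum: "(norm (x :: real^'n))\<^sup>2 = (\<Sum>i\<in>UNIV. (x $ i)\<^sup>2)"
  unfolding power2_norm_eq_inner inner_vec_def by (simp add: power2_eq_square)

lemma l1norm_add_le: "l1norm (x + y) \<le> l1norm x + l1norm y"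
  unfolding l1norm_def sum.distrib[symmetric] by (intro sum_mono) (simp add: abs_triangle_ineq)

lemma l1norm_scaleR: "l1norm (c *\<^sub>R x) = \<bar>c\<bar> * l1norm x"
  by (simp add: l1norm_def abs_mult sum_distrib_left)

lemma l1norm_midpoint_le: "l1norm ((1/2) *\<^sub>R (x + y)) \<le> (l1norm x + l1norm y) / 2"
  unfolding l1norm_scaleR using l1norm_add_le[of x y] by simp

lemma abs_le_linfnorm: "\<bar>z $ i\<bar> \<le> linfnorm z"
  unfolding linfnorm_def by (rule Max_ge) auto

lemma linfnorm_attained: "\<exists>i. \<bar>z $ i\<bar> = linfnorm z"
proof -
  have "linfnorm z \<in> range (\<lambda>i. \<bar>z $ i\<bar>)" unfolding linfnorm_def by (rule Max_in) auto
  then show ?thesis by auto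
qed

lemma soft_vec_eq_0:
  assumes "linfnorm z \<le> m"
  shows "soft_vec z m = 0"
proof -
  have "soft (z $ i) m = 0" for i
    using abs_le_linfnorm[of z i] assms by (simp add: soft_def max_def)
  then show ?thesis by (simp add: soft_vec_def vec_eq_iff)
qed

lemma soft_vec_prox_le:
  fixes z x :: "real^'n"
  assumes "c \<ge> 0"
  shows "(1/2) * (norm (z - soft_vec z c))\<^sup>2 + c * l1norm (soft_vec z c)
    \<le> (1/2) * (norm (z - x))\<^sup>2 + c * l1norm x"
proof -
  have sum_form: "(1/2) * (norm (z - y))\<^sup>2 + c * l1norm y
      = (\<Sum>i\<in>UNIV. (1/2) * (z $ i - y $ i)\<^sup>2 + c * \<bar>y $ i\<bar>)" for y :: "real^'n"
    by (simp add: power2_norm_vec_eq_sum l1norm_def sum.distrib sum_distrib_left)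
  show ?thesis
    unfolding sum_form using soft_prox_le[OF assms] by (intro sum_mono) (simp add: soft_vec_def)
qed

text \<open>\<parallel>S(z, m)\<parallel>_1 for m \<ge> 0 (lemma \<open>l1norm_soft_vec\<close>), written without \<open>sgn\<close> so that
  continuity and monotonicity in m are immediate.\<close>
definition l1_excess :: "real^'n \<Rightarrow> real \<Rightarrow> real" where
  "l1_excess z m = (\<Sum>i\<in>UNIV. max (\<bar>z $ i\<bar> - m) 0)"

lemma l1norm_soft_vec: "m \<ge> 0 \<Longrightarrow> l1norm (soft_vec z m) = l1_excess z m"
  by (simp add: l1norm_def soft_vec_def l1_excess_def abs_soft)

lemma l1_excess_antimono: "a \<le> b \<Longrightarrow> l1_excess z b \<le> l1_excess z a"
  unfolding l1_excess_def by (intro sum_mono) auto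

lemma l1_excess_nonneg: "l1_excess z a \<ge> 0"
  unfolding l1_excess_def by (intro sum_nonneg) auto

lemma l1_excess_ge_linfnorm: "linfnorm z - a \<le> l1_excess z a"
proof -
  obtain i where i: "\<bar>z $ i\<bar> = linfnorm z" using linfnorm_attained by blast
  have "max (\<bar>z $ i\<bar> - a) 0 \<le> l1_excess z a"
    unfolding l1_excess_def by (rule member_le_sum) auto
  then show ?thesis using i by linarith
qed

lemma l1_excess_eq_0:
  assumes "linfnorm z \<le> m"
  shows "l1_excess z m = 0"
proof -
  have "max (\<bar>z $ i\<bar> - m) 0 = 0" for i
    using abs_le_linfnorm[of z i] assms by simp
  then show ?thesis by (simp add: l1_excess_def)
qed

lemma objective_split:
  "objective w z lam bp bm \<theta> =
     ((1/2) * (w - (bp - bm))\<^sup>2 + (lam - \<alpha>) * \<bar>bp - bm\<bar>) +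
     ((1/2) * (norm (z - \<theta>))\<^sup>2 + (lam + \<alpha>) * l1norm \<theta>) +
     (lam - \<alpha>) * (bp + bm - \<bar>bp - bm\<bar>) + \<alpha> * (bp + bm - l1norm \<theta>)"
  by (simp add: objective_def algebra_simps)

lemma is_solution_certificate:
  fixes w lam \<alpha> t :: real and z :: "real^'n"
  defines "\<beta> \<equiv> soft w (lam - \<alpha>)" and "\<theta> \<equiv> soft_vec z (lam + \<alpha>)"
  assumes \<alpha>: "0 \<le> \<alpha>" "\<alpha> \<le> lam"
    and t: "\<bar>\<beta>\<bar> \<le> t" "l1norm \<theta> \<le> t"
    and slack: "\<alpha> < lam \<Longrightarrow> t = \<bar>\<beta>\<bar>" "0 < \<alpha> \<Longrightarrow> l1norm \<theta> = t"
  shows "is_solution w z lam ((t + \<beta>) / 2) ((t - \<beta>) / 2) \<theta>"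
  unfolding is_solution_def
proof (intro conjI allI impI)
  show "feasible ((t + \<beta>) / 2) ((t - \<beta>) / 2) \<theta>"
    using t by (auto simp: feasible_def field_simps)
  fix bp' bm' and \<theta>' :: "real^'n"
  assume "feasible bp' bm' \<theta>'"
  have sum_diff: "(t + \<beta>) / 2 + (t - \<beta>) / 2 = t" "(t + \<beta>) / 2 - (t - \<beta>) / 2 = \<beta>"
    by (simp_all add: field_simps)
  from \<open>feasible bp' bm' \<theta>'\<close>
  have "0 \<le> (lam - \<alpha>) * (bp' + bm' - \<bar>bp' - bm'\<bar>)" "0 \<le> \<alpha> * (bp' + bm' - l1norm \<theta>')"
    using \<alpha> by (auto simp: feasible_def)
  moreover have "(lam - \<alpha>) * (t - \<bar>\<beta>\<bar>) = 0" "\<alpha> * (t - l1norm \<theta>) = 0"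
    using \<alpha> slack by (cases "\<alpha> < lam"; cases "0 < \<alpha>"; auto)+
  moreover have "(1/2) * (w - \<beta>)\<^sup>2 + (lam - \<alpha>) * \<bar>\<beta>\<bar>
      \<le> (1/2) * (w - (bp' - bm'))\<^sup>2 + (lam - \<alpha>) * \<bar>bp' - bm'\<bar>"
    unfolding \<beta>_def using \<alpha> by (intro soft_prox_le) simp
  moreover have "(1/2) * (norm (z - \<theta>))\<^sup>2 + (lam + \<alpha>) * l1norm \<theta>
      \<le> (1/2) * (norm (z - \<theta>'))\<^sup>2 + (lam + \<alpha>) * l1norm \<theta>'"
    unfolding \<theta>_def using \<alpha> by (intro soft_vec_prox_le) simp
  ultimately show "objective w z lam ((t + \<beta>) / 2) ((t - \<beta>) / 2) \<theta>
      \<le> objective w z lam bp' bm' \<theta>'"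
    unfolding objective_split[where \<alpha> = \<alpha>] sum_diff by linarith
qed

lemma norm_sub_midpoint_power2:
  fixes z a b :: "'a::real_inner"
  shows "(norm (z - (1/2) *\<^sub>R (a + b)))\<^sup>2
    = ((norm (z - a))\<^sup>2 + (norm (z - b))\<^sup>2) / 2 - (norm (a - b))\<^sup>2 / 4"
  by (simp add: power2_norm_eq_inner inner_diff_left inner_diff_right inner_add_left
      inner_add_right inner_commute field_simps)

lemma objective_midpoint_le:
  fixes z \<theta>1 \<theta>2 :: "real^'n"
  assumes "lam \<ge> 0"
  shows "objective w z lam ((bp1 + bp2) / 2) ((bm1 + bm2) / 2) ((1/2) *\<^sub>R (\<theta>1 + \<theta>2))
    \<le> (objective w z lam bp1 bm1 \<theta>1 + objective w z lam bp2 bm2 \<theta>2) / 2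
       - (((bp1 - bm1) - (bp2 - bm2))\<^sup>2 + (norm (\<theta>1 - \<theta>2))\<^sup>2) / 8"
proof -
  have "lam * l1norm ((1/2) *\<^sub>R (\<theta>1 + \<theta>2)) \<le> lam * ((l1norm \<theta>1 + l1norm \<theta>2) / 2)"
    using l1norm_midpoint_le assms by (rule mult_left_mono)
  moreover have "(w - ((bp1 + bp2) / 2 - (bm1 + bm2) / 2))\<^sup>2
      = ((w - (bp1 - bm1))\<^sup>2 + (w - (bp2 - bm2))\<^sup>2) / 2 - ((bp1 - bm1) - (bp2 - bm2))\<^sup>2 / 4"
    by (simp add: power2_eq_square field_simps)
  ultimately show ?thesis
    unfolding objective_def norm_sub_midpoint_power2 by (simp add: field_simps)
qed

lemma is_solution_unique:
  fixes z \<theta>1 \<theta>2 :: "real^'n"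
  assumes s1: "is_solution w z lam bp1 bm1 \<theta>1" and s2: "is_solution w z lam bp2 bm2 \<theta>2"
    and "lam \<ge> 0"
  shows "bp1 - bm1 = bp2 - bm2 \<and> \<theta>1 = \<theta>2"
proof -
  define bp bm \<theta> where "bp = (bp1 + bp2) / 2" and "bm = (bm1 + bm2) / 2"
    and "\<theta> = (1/2) *\<^sub>R (\<theta>1 + \<theta>2)"
  have "feasible bp1 bm1 \<theta>1" "feasible bp2 bm2 \<theta>2"
    using s1 s2 by (auto simp: is_solution_def)
  then have "feasible bp bm \<theta>"
    using l1norm_midpoint_le[of \<theta>1 \<theta>2, folded \<theta>_def]
    unfolding feasible_def bp_def bm_def by (auto simp: field_simps)
  then have "objective w z lam bp1 bm1 \<theta>1 \<le> objective w z lam bp bm \<theta>"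
    "objective w z lam bp2 bm2 \<theta>2 \<le> objective w z lam bp bm \<theta>"
    using s1 s2 by (auto simp: is_solution_def)
  with objective_midpoint_le[OF \<open>lam \<ge> 0\<close>, of w z bp1 bp2 bm1 bm2 \<theta>1 \<theta>2,
      folded bp_def bm_def \<theta>_def]
  have "((bp1 - bm1) - (bp2 - bm2))\<^sup>2 + (norm (\<theta>1 - \<theta>2))\<^sup>2 \<le> 0" by argo
  then show ?thesis
    by (simp add: sum_power2_le_zero_iff)
qed

lemma solution_eq_soft:
  fixes z \<theta> :: "real^'n"
  assumes sol: "is_solution w z lam bp bm \<theta>" and "w \<ge> 0" and \<alpha>: "0 \<le> \<alpha>" "\<alpha> \<le> lam"
    and t: "max (w - lam + \<alpha>) 0 \<le> t" "l1_excess z (lam + \<alpha>) \<le> t"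
    and slack: "\<alpha> < lam \<Longrightarrow> t = max (w - lam + \<alpha>) 0"
      "0 < \<alpha> \<Longrightarrow> l1_excess z (lam + \<alpha>) = t"
  shows "bp - bm = max (w - lam + \<alpha>) 0 \<and> \<theta> = soft_vec z (lam + \<alpha>)"
proof -
  define \<beta> where "\<beta> = max (w - lam + \<alpha>) 0"
  have "soft w (lam - \<alpha>) = \<beta>"
    using soft_of_nonneg[of w "lam - \<alpha>"] \<open>w \<ge> 0\<close> \<alpha> by (simp add: \<beta>_def)
  moreover have "l1norm (soft_vec z (lam + \<alpha>)) = l1_excess z (lam + \<alpha>)"
    using \<alpha> by (simp add: l1norm_soft_vec)
  ultimately have "is_solution w z lam ((t + \<beta>) / 2) ((t - \<beta>) / 2) (soft_vec z (lam + \<alpha>))"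
    using is_solution_certificate[OF \<alpha>, of w t z] t slack by (simp add: \<beta>_def)
  from is_solution_unique[OF sol this] \<alpha> show ?thesis
    by (simp add: \<beta>_def field_simps)
qed

lemma solution_eq_0:
  fixes z \<theta> :: "real^'n"
  assumes sol: "is_solution w z lam bp bm \<theta>" and "w \<ge> 0" and \<alpha>: "0 \<le> \<alpha>" "\<alpha> \<le> lam"
    and "w - lam + \<alpha> \<le> 0" and "linfnorm z \<le> lam + \<alpha>"
  shows "bp - bm = 0 \<and> \<theta> = 0"
  using solution_eq_soft[OF sol \<open>w \<ge> 0\<close> \<alpha>, of 0] assms(5,6)
  by (simp add: l1_excess_eq_0 soft_vec_eq_0)

lemma solution_soft_lam:
  fixes z \<theta> :: "real^'n"
  assumes sol: "is_solution w z lam bp bm \<theta>" and "w \<ge> 0" "lam \<ge> 0"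
    and "l1_excess z lam + lam \<le> w"
  shows "bp - bm = w - lam \<and> \<theta> = soft_vec z lam"
  using solution_eq_soft[OF sol \<open>w \<ge> 0\<close> _ \<open>lam \<ge> 0\<close>, of "w - lam"] assms(4)
    l1_excess_nonneg[of z lam] by simp

lemma solution_soft_double_lam:
  fixes z \<theta> :: "real^'n"
  assumes sol: "is_solution w z lam bp bm \<theta>" and "w \<ge> 0" "lam \<ge> 0"
    and "w \<le> l1_excess z (2 * lam)"
  shows "bp - bm = w \<and> \<theta> = soft_vec z (2 * lam)"
  using solution_eq_soft[OF sol \<open>w \<ge> 0\<close> \<open>lam \<ge> 0\<close> order_refl, of "l1_excess z (2 * lam)"]
    assms(2,4) by (simp flip: mult_2)

lemma solution_soft_interior:
  fixes z \<theta> :: "real^'n"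
  assumes sol: "is_solution w z lam bp bm \<theta>" and "w \<ge> 0" "lam > 0"
    and lower: "w < l1_excess z lam + lam" and upper: "l1_excess z (2 * lam) < w"
  shows "\<exists>\<alpha>>0. bp - bm = w - lam + \<alpha> \<and> \<theta> = soft_vec z (lam + \<alpha>)"
proof -
  define g where "g a = l1_excess z (lam + a) - (w - lam + a)" for a
  have "continuous_on {0..lam} g"
    unfolding g_def l1_excess_def by (intro continuous_intros)
  moreover have "g lam \<le> 0" "0 \<le> g 0"
    using lower upper by (simp_all add: g_def flip: mult_2)
  ultimately obtain \<alpha> where \<alpha>: "0 \<le> \<alpha>" "\<alpha> \<le> lam" "g \<alpha> = 0"
    using IVT2'[of g lam 0 0] \<open>lam > 0\<close> by auto
  have "\<alpha> \<noteq> 0" "\<alpha> \<noteq> lam"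
    using \<alpha>(3) lower upper by (auto simp: g_def simp flip: mult_2)
  have excess: "l1_excess z (lam + \<alpha>) = w - lam + \<alpha>"
    using \<alpha>(3) by (simp add: g_def)
  then have "max (w - lam + \<alpha>) 0 = w - lam + \<alpha>"
    using l1_excess_nonneg[of z "lam + \<alpha>"] by simp
  then have "bp - bm = w - lam + \<alpha> \<and> \<theta> = soft_vec z (lam + \<alpha>)"
    using solution_eq_soft[OF sol \<open>w \<ge> 0\<close> \<alpha>(1,2), of "w - lam + \<alpha>"] excess by simp
  then show ?thesis
    using \<alpha> \<open>\<alpha> \<noteq> 0\<close> by (intro exI[of _ \<alpha>]) auto
qed

lemma solution_soft_shifted:
  fixes z \<theta> :: "real^'n"
  assumes sol: "is_solution w z lam bp bm \<theta>" and "w \<ge> 0" "lam > 0"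
    and "w < l1_excess z lam + lam"
  shows "\<exists>\<alpha>>0. bp - bm = w - lam + \<alpha> \<and> \<theta> = soft_vec z (lam + \<alpha>)"
proof (cases "w \<le> l1_excess z (2 * lam)")
  case True
  then have "bp - bm = w - lam + lam \<and> \<theta> = soft_vec z (lam + lam)"
    using solution_soft_double_lam[OF sol \<open>w \<ge> 0\<close>] \<open>lam > 0\<close> by (simp flip: mult_2)
  then show ?thesis
    using \<open>lam > 0\<close> by blast
next
  case False
  then show ?thesis
    using solution_soft_interior[OF assms] by simp
qed

lemma l1_excess_add_le_mono:
  fixes z :: "real^'n"
  assumes "m \<le> lam" "lam \<le> w" "linfnorm z \<le> w"
    and "l1_excess z m + m \<le> w"
  shows "l1_excess z lam + lam \<le> w"
proof (cases "m = w")
  case True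
  then show ?thesis using assms by simp
next
  case False
  then have "w - m > 0" using assms by simp
  \<comment> \<open>each term is convex in the threshold and vanishes at \<open>w \<ge> \<bar>z $ i\<bar>\<close>,
    so on \<open>[m, w]\<close> it lies below its chord\<close>
  have chord: "(w - m) * max (\<bar>z $ i\<bar> - lam) 0 \<le> (w - lam) * max (\<bar>z $ i\<bar> - m) 0" for i
  proof (cases "\<bar>z $ i\<bar> \<le> lam")
    case False
    have "(w - lam) * (\<bar>z $ i\<bar> - m) - (w - m) * (\<bar>z $ i\<bar> - lam) = (lam - m) * (w - \<bar>z $ i\<bar>)"
      by (simp add: algebra_simps)
    moreover have "0 \<le> (lam - m) * (w - \<bar>z $ i\<bar>)"
      using assms abs_le_linfnorm[of z i] by simp
    ultimately show ?thesis using False assms by simp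
  qed (use assms in simp)
  have "(w - m) * l1_excess z lam \<le> (w - lam) * l1_excess z m"
    unfolding l1_excess_def sum_distrib_left by (intro sum_mono chord)
  also have "\<dots> \<le> (w - lam) * (w - m)"
    using assms by (intro mult_left_mono) auto
  finally have "l1_excess z lam \<le> w - lam"
    using \<open>w - m > 0\<close> by (simp add: mult.commute)
  then show ?thesis by simp
qed

lemma Least_eq_Inf_of_closed:
  fixes S :: "real set"
  assumes "closed S" "S \<noteq> {}" "bdd_below S"
  shows "(LEAST x. x \<in> S) = Inf S"
  using closed_contains_Inf[OF assms(2,3,1)] by (intro Least_equality) (auto intro: cInf_lower assms)

lemma Greatest_eq_Sup_of_closed:
  fixes S :: "real set"
  assumes "closed S" "S \<noteq> {}" "bdd_above S"
  shows "(GREATEST x. x \<in> S) = Sup S"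
  using closed_contains_Sup[OF assms(2,3,1)] by (intro Greatest_equality) (auto intro: cSup_upper assms)

lemma closed_lam1_set: "closed {l. 0 \<le> l \<and> l1_excess z l + l \<le> w}"
  unfolding l1_excess_def by (intro closed_Collect_conj closed_Collect_le continuous_intros)

lemma closed_lam3_set: "closed {l. 0 \<le> l \<and> w \<le> l1_excess z (2 * l)}"
  unfolding l1_excess_def by (intro closed_Collect_conj closed_Collect_le continuous_intros)

lemma lam1_eq_Inf:
  fixes w :: real and z :: "real^'n"
  defines "S \<equiv> {l. 0 \<le> l \<and> l1_excess z l + l \<le> w}"
  shows "lam1 w z = (if S = {} then \<infinity> else ereal (Inf S))"
proof -
  have "{l. l \<ge> 0 \<and> l1norm (soft_vec z l) + l \<le> w} = S"
    by (auto simp: S_def l1norm_soft_vec)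
  moreover have "closed S"
    unfolding S_def by (rule closed_lam1_set)
  moreover have "bdd_below S"
    by (rule bdd_belowI[of _ 0]) (simp add: S_def)
  ultimately show ?thesis
    by (simp add: lam1_def Least_eq_Inf_of_closed)
qed

lemma lam3_eq_Sup:
  fixes w :: real and z :: "real^'n"
  defines "S \<equiv> {l. 0 \<le> l \<and> w \<le> l1_excess z (2 * l)}"
  shows "lam3 w z = (if S = {} then -\<infinity> else if \<not> bdd_above S then \<infinity> else ereal (Sup S))"
proof -
  have "{l. l \<ge> 0 \<and> l1norm (soft_vec z (2 * l)) \<ge> w} = S"
    by (auto simp: S_def l1norm_soft_vec)
  moreover have "closed S"
    unfolding S_def by (rule closed_lam3_set)
  ultimately show ?thesis
    by (simp add: lam3_def Greatest_eq_Sup_of_closed)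
qed

lemma lam1_le_imp:
  fixes z :: "real^'n"
  assumes "lam1 w z \<le> ereal lam"
  obtains m where "m \<le> lam" "l1_excess z m + m \<le> w"
proof -
  define S where "S = {l. 0 \<le> l \<and> l1_excess z l + l \<le> w}"
  have "S \<noteq> {}" "Inf S \<le> lam"
    using assms by (auto simp: lam1_eq_Inf S_def[symmetric] split: if_splits)
  moreover have "Inf S \<in> S"
    using \<open>S \<noteq> {}\<close> closed_lam1_set unfolding S_def
    by (intro closed_contains_Inf bdd_belowI[of _ 0]) auto
  ultimately show ?thesis
    using that by (auto simp: S_def)
qed

lemma less_lam1_imp:
  fixes z :: "real^'n"
  assumes "0 \<le> lam" "ereal lam < lam1 w z"
  shows "w < l1_excess z lam + lam"
proof (rule ccontr)
  define S where "S = {l. 0 \<le> l \<and> l1_excess z l + l \<le> w}"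
  assume "\<not> w < l1_excess z lam + lam"
  then have "lam \<in> S" using assms(1) by (simp add: S_def)
  moreover have "bdd_below S"
    by (rule bdd_belowI[of _ 0]) (simp add: S_def)
  ultimately have "lam1 w z \<le> ereal lam"
    by (auto simp: lam1_eq_Inf S_def[symmetric] intro: cInf_lower)
  with assms(2) show False by simp
qed

lemma less_lam3_imp:
  fixes z :: "real^'n"
  assumes "ereal lam < lam3 w z"
  shows "w \<le> l1_excess z (2 * lam)"
proof -
  define S where "S = {l. 0 \<le> l \<and> w \<le> l1_excess z (2 * l)}"
  obtain y where "y \<in> S" "lam \<le> y"
  proof (cases "bdd_above S")
    case True
    then have "S \<noteq> {}" "lam < Sup S"
      using assms by (auto simp: lam3_eq_Sup S_def[symmetric] split: if_splits)
    then show ?thesis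
      using that less_cSup_iff[OF \<open>S \<noteq> {}\<close> True] by (auto intro: less_imp_le)
  next
    case False
    then show ?thesis
      using that unfolding bdd_above_def by (auto simp: not_le intro: less_imp_le)
  qed
  then show ?thesis
    using l1_excess_antimono[of "2 * lam" "2 * y" z] by (auto simp: S_def)
qed

lemma solution_soft_lam_of_lam1_le:
  fixes z \<theta> :: "real^'n"
  assumes sol: "is_solution w z lam bp bm \<theta>" and "w \<ge> 0" "lam \<ge> 0"
    and "linfnorm z \<le> w" "lam1 w z \<le> ereal lam" "lam < w"
  shows "bp - bm = w - lam \<and> \<theta> = soft_vec z lam"
proof -
  obtain m where "m \<le> lam" "l1_excess z m + m \<le> w"
    using lam1_le_imp[OF \<open>lam1 w z \<le> ereal lam\<close>] .
  with assms(4,6) have "l1_excess z lam + lam \<le> w"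
    using l1_excess_add_le_mono[of m lam w z] by simp
  then show ?thesis
    by (rule solution_soft_lam[OF sol \<open>w \<ge> 0\<close> \<open>lam \<ge> 0\<close>])
qed

theorem proposition1:
  fixes w lam bp bm :: real and z \<theta> :: "real^'n"
  assumes w_nonneg: "w \<ge> 0"
    and lam_pos: "lam > 0"
    and sol: "is_solution w z lam bp bm \<theta>"
  shows
   "(linfnorm z \<le> l1norm z \<and> l1norm z < w \<longrightarrow>
       (lam \<ge> w \<longrightarrow> bp - bm = 0 \<and> \<theta> = 0) \<and>
       (lam1 w z \<le> ereal lam \<and> lam < w \<longrightarrow> bp - bm = w - lam \<and> \<theta> = soft_vec z lam) \<and>
       (ereal lam < lam1 w z \<longrightarrow>
          (\<exists>\<alpha>>0. bp - bm = w - lam + \<alpha> \<and> \<theta> = soft_vec z (lam + \<alpha>)))) \<and>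
    (linfnorm z \<le> w \<and> w \<le> l1norm z \<longrightarrow>
       (lam \<ge> w \<longrightarrow> bp - bm = 0 \<and> \<theta> = 0) \<and>
       (lam1 w z \<le> ereal lam \<and> lam < w \<longrightarrow> bp - bm = w - lam \<and> \<theta> = soft_vec z lam) \<and>
       (lam3 w z \<le> ereal lam \<and> ereal lam < lam1 w z \<longrightarrow>
          (\<exists>\<alpha>>0. bp - bm = w - lam + \<alpha> \<and> \<theta> = soft_vec z (lam + \<alpha>))) \<and>
       (ereal lam < lam3 w z \<longrightarrow> bp - bm = w \<and> \<theta> = soft_vec z (2 * lam))) \<and>
    (w < linfnorm z \<and> linfnorm z \<le> l1norm z \<longrightarrow>
       (lam \<ge> lam4 w z \<longrightarrow> bp - bm = 0 \<and> \<theta> = 0) \<and>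
       (lam3 w z \<le> ereal lam \<and> lam < lam4 w z \<longrightarrow>
          (\<exists>\<alpha>>0. bp - bm = w - lam + \<alpha> \<and> \<theta> = soft_vec z (lam + \<alpha>))) \<and>
       (ereal lam < lam3 w z \<longrightarrow> bp - bm = w \<and> \<theta> = soft_vec z (2 * lam)))"
proof -
  have lam: "0 \<le> lam" using lam_pos by simp
  have zero_main: "bp - bm = 0 \<and> \<theta> = 0" if "linfnorm z \<le> w" "w \<le> lam"
    using solution_eq_0[OF sol w_nonneg order_refl lam] that by simp
  have zero_interaction: "bp - bm = 0 \<and> \<theta> = 0" if "w < linfnorm z" "lam4 w z \<le> lam"
    using solution_eq_0[OF sol w_nonneg, of "max (linfnorm z - lam) 0"] that w_nonneg
    by (simp add: lam4_def max_def)
  have lasso: "bp - bm = w - lam \<and> \<theta> = soft_vec z lam"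
    if "linfnorm z \<le> w" "lam1 w z \<le> ereal lam" "lam < w"
    using solution_soft_lam_of_lam1_le[OF sol w_nonneg lam that] .
  have double: "bp - bm = w \<and> \<theta> = soft_vec z (2 * lam)" if "ereal lam < lam3 w z"
    using solution_soft_double_lam[OF sol w_nonneg lam less_lam3_imp[OF that]] .
  have shifted: "\<exists>\<alpha>>0. bp - bm = w - lam + \<alpha> \<and> \<theta> = soft_vec z (lam + \<alpha>)"
    if "ereal lam < lam1 w z \<or> w < linfnorm z"
  proof -
    have "w < l1_excess z lam + lam"
      using that less_lam1_imp[OF lam] l1_excess_ge_linfnorm[of z lam] by auto
    then show ?thesis by (rule solution_soft_shifted[OF sol w_nonneg lam_pos])
  qed
  have linfnorm_le: "linfnorm z \<le> w" if "linfnorm z \<le> l1norm z" "l1norm z < w"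
    using that by simp
  show ?thesis
    using zero_main zero_interaction lasso shifted double linfnorm_le by blast
qed

end
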